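(* Let $n\geq 3$. Let $H$ be the $n!\times(n-1)^2$ $0/1$ matrix with rows indexed by $S(n)$, columns indexed by ordered pairs $(i,j)$ with $i,j\in\{1,\dots,n-1\}$, and $(\pi,(i,j))$-entry equal to $1$ iff $\pi(i)=j$. Let $N$ be the submatrix of $H$ formed by the rows indexed by derangements of $\{1,\dots,n\}$, and let $[N|\mathbf 1]$ be $N$ with an extra all-ones column appended. If $y$ (indexed by the columns of $H$ together with one extra coordinate for the appended column) satisfies $[N|\mathbf 1]y=0$, then there is a scalar $c$ such that $y_{(i,j)}=c$ for all $i\neq j$ in $\{1,\dots,n-1\}$ and the extra coordinate of $y$ equals $-(n-2)c$; i.e. the restriction of $y$ to the coordinates $(i,j)$ with $i\neq j$ together with the extra coordinate is a scalar multiple of $(1,1,\dots,1,-(n-2))$.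
   Context: A derangement of $\{1,\dots,n\}$ is a permutation with no fixed points; $S(n)$ is the symmetric group on $\{1,\dots,n\}$. *)

theory Defs
  imports Complex_Main "HOL-Combinatorics.Permutations"
begin

definition derangement :: "nat \<Rightarrow> (nat \<Rightarrow> nat) \<Rightarrow> bool" where
  "derangement n p \<longleftrightarrow> p permutes {1..n} \<and> (\<forall>i\<in>{1..n}. p i \<noteq> i)"

definition H_entry :: "(nat \<Rightarrow> nat) \<Rightarrow> nat \<times> nat \<Rightarrow> real" where
  "H_entry p ij = (if p (fst ij) = snd ij then 1 else 0)"

text \<open>Row p of [N|1] applied to the vector (y, t).\<close>
definition N1_row_apply :: "nat \<Rightarrow> (nat \<Rightarrow> nat) \<Rightarrow> (nat \<times> nat \<Rightarrow> real) \<Rightarrow> real \<Rightarrow> real" where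
  "N1_row_apply n p y t = (\<Sum>ij\<in>{1..n-1} \<times> {1..n-1}. H_entry p ij * y ij) + 1 * t"

end

theory Submission
  imports Defs "HOL-Combinatorics.Cycles"
begin

(* Let y be a vector with [N|1] (y, t) = 0, i.e. every derangement p of {1..n} has the same
   row value  sum_{i <= n-1, p i <= n-1} y(i, p i) = -t.

   The proof compares row values of derangements that differ by a transposition.  If
   p l = n and p a = b, then p o (a l) is a derangement agreeing with p except that a now
   goes to n and l to b; equality of the two row values gives y(a,b) = y(l,b).  Dually,
   composing with (b k) on the left yields y(a,b) = y(a,k).  For n >= 4 these two moves
   connect any two off-diagonal entries, so y is constant (= c) off the diagonal; for n = 3
   the two 3-cycles give y(1,2) = y(2,1) directly.  Finally, in any derangement exactly one
   i <= n-1 is sent to n and the remaining n-2 terms are off-diagonal, so the row value is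
   (n-2) c, whence t = -(n-2) c.

   The required derangements are all obtained by closing a prescribed path of distinct
   points into one long cycle through {1..n}. *)

lemma cycle_of_list_nth:
  assumes "distinct cs" "i < length cs"
  shows "cycle_of_list cs (cs ! i) = cs ! (Suc i mod length cs)"
proof -
  have "map (cycle_of_list cs) cs = rotate1 cs"
    using cyclic_rotation[of cs 1] assms(1) by simp
  then have "cycle_of_list cs (cs ! i) = rotate1 cs ! i"
    using assms(2) by (metis nth_map)
  also have "\<dots> = cs ! (Suc i mod length cs)"
    using assms(2) by (simp add: rotate1_rotate_swap nth_rotate[of i cs 1, simplified])
  finally show ?thesis .
qed

(* Every path of at least two distinct points in {1..n} extends to a derangement of {1..n}:
   close it up into a single cycle through all remaining points. *)
lemma derangement_through_path:
  assumes "distinct xs" "set xs \<subseteq> {1..n}" "2 \<le> length xs"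
  shows "\<exists>p. derangement n p \<and> (\<forall>i. Suc i < length xs \<longrightarrow> p (xs ! i) = xs ! Suc i)"
proof -
  define cs where "cs = xs @ sorted_list_of_set ({1..n} - set xs)"
  have dist: "distinct cs" and set_cs: "set cs = {1..n}" and len: "length xs \<le> length cs"
    using assms(1,2) unfolding cs_def by auto
  let ?p = "cycle_of_list cs"
  have "?p permutes {1..n}"
    using cycle_permutes[of cs] set_cs by simp
  moreover have "?p x \<noteq> x" if "x \<in> {1..n}" for x
  proof -
    have "x \<in> set cs" using that set_cs by simp
    then obtain i where i: "i < length cs" "cs ! i = x"
      by (auto simp: in_set_conv_nth)
    have "Suc i mod length cs \<noteq> i" "Suc i mod length cs < length cs"
      using i(1) assms(3) len by (auto simp: mod_if)
    then show ?thesis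
      unfolding i(2)[symmetric] using cycle_of_list_nth[OF dist i(1)] i(1)
      by (simp add: nth_eq_iff_index_eq[OF dist])
  qed
  moreover have "?p (xs ! i) = xs ! Suc i" if "Suc i < length xs" for i
    using cycle_of_list_nth[OF dist, of i] that len by (simp add: cs_def nth_append)
  ultimately show ?thesis unfolding derangement_def by blast
qed

lemma derangement_compose_transpose_right:
  assumes "derangement n p" "a \<in> {1..n}" "l \<in> {1..n}" "p a \<noteq> l" "p l \<noteq> a"
  shows "derangement n (p \<circ> transpose a l)"
proof -
  have "p \<circ> transpose a l permutes {1..n}"
    using assms(1-3) unfolding derangement_def by (intro permutes_compose permutes_swap_id) auto
  moreover have "(p \<circ> transpose a l) i \<noteq> i" if "i \<in> {1..n}" for i
    using assms that unfolding derangement_def by (auto simp: transpose_def)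
  ultimately show ?thesis unfolding derangement_def by blast
qed

lemma derangement_compose_transpose_left:
  assumes "derangement n p" "b \<in> {1..n}" "k \<in> {1..n}" "p b \<noteq> k" "p k \<noteq> b"
  shows "derangement n (transpose b k \<circ> p)"
proof -
  have "transpose b k \<circ> p permutes {1..n}"
    using assms(1-3) unfolding derangement_def by (intro permutes_compose permutes_swap_id) auto
  moreover have "(transpose b k \<circ> p) i \<noteq> i" if "i \<in> {1..n}" for i
    using assms that unfolding derangement_def by (auto simp: transpose_def)
  ultimately show ?thesis unfolding derangement_def by blast
qed

definition row_term :: "nat \<Rightarrow> (nat \<Rightarrow> nat) \<Rightarrow> (nat \<times> nat \<Rightarrow> real) \<Rightarrow> nat \<Rightarrow> real" where
  "row_term n p y i = (if p i \<in> {1..n-1} then y (i, p i) else 0)"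

definition row_value :: "nat \<Rightarrow> (nat \<Rightarrow> nat) \<Rightarrow> (nat \<times> nat \<Rightarrow> real) \<Rightarrow> real" where
  "row_value n p y = (\<Sum>i\<in>{1..n-1}. row_term n p y i)"

(* The entries of H are indicators, so each row of H y collapses to a sum over positions. *)
lemma N1_row_apply_eq: "N1_row_apply n p y t = row_value n p y + t"
proof -
  have inner: "(\<Sum>j\<in>{1..n-1}. H_entry p (i, j) * y (i, j)) = row_term n p y i" for i
  proof -
    have "(\<Sum>j\<in>{1..n-1}. H_entry p (i, j) * y (i, j))
        = (\<Sum>j\<in>{1..n-1}. if p i = j then y (i, p i) else 0)"
      by (rule sum.cong) (auto simp: H_entry_def)
    then show ?thesis by (simp add: row_term_def)
  qed
  have "(\<Sum>ij\<in>{1..n-1} \<times> {1..n-1}. H_entry p ij * y ij)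
      = (\<Sum>i\<in>{1..n-1}. \<Sum>j\<in>{1..n-1}. H_entry p (i, j) * y (i, j))"
    by (simp add: sum.cartesian_product)
  then show ?thesis
    unfolding N1_row_apply_def row_value_def inner by simp
qed

lemma row_value_diff:
  assumes "a \<in> {1..n-1}" "l \<in> {1..n-1}" "a \<noteq> l" "\<And>i. i \<in> {1..n-1} - {a, l} \<Longrightarrow> p i = q i"
  shows "row_value n p y - row_value n q y
       = row_term n p y a + row_term n p y l - row_term n q y a - row_term n q y l"
proof -
  have "row_value n p y - row_value n q y = (\<Sum>i\<in>{1..n-1}. row_term n p y i - row_term n q y i)"
    unfolding row_value_def by (simp add: sum_subtractf)
  also have "\<dots> = (\<Sum>i\<in>{a, l}. row_term n p y i - row_term n q y i)"
    using assms by (intro sum.mono_neutral_right) (auto simp: row_term_def)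
  finally show ?thesis using assms(3) by simp
qed

context
  fixes n :: nat and y :: "nat \<times> nat \<Rightarrow> real"
  assumes row_value_const:
    "\<And>p q. derangement n p \<Longrightarrow> derangement n q \<Longrightarrow> row_value n p y = row_value n q y"
begin

lemma same_column:
  assumes "a \<in> {1..n-1}" "l \<in> {1..n-1}" "b \<in> {1..n-1}" "a \<noteq> l" "a \<noteq> b" "l \<noteq> b"
  shows "y (a, b) = y (l, b)"
proof -
  have path_distinct: "distinct [l, n, a, b]" and path_in_range: "set [l, n, a, b] \<subseteq> {1..n}"
    and n_large: "2 \<le> n"
    using assms by auto
  obtain p where p: "derangement n p" and pl: "p l = n" and pa: "p a = b"
    using derangement_through_path[OF path_distinct path_in_range] by (auto simp: All_less_Suc2)
  define q where "q = p \<circ> transpose a l"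
  have q: "derangement n q"
    unfolding q_def using assms pl pa by (intro derangement_compose_transpose_right[OF p]) auto
  have "row_value n p y - row_value n q y
      = row_term n p y a + row_term n p y l - row_term n q y a - row_term n q y l"
    using assms by (intro row_value_diff) (auto simp: q_def)
  also have "\<dots> = y (a, b) - y (l, b)"
    using assms pl pa n_large by (auto simp: row_term_def q_def)
  finally show ?thesis using row_value_const[OF p q] by simp
qed

lemma same_row:
  assumes "a \<in> {1..n-1}" "b \<in> {1..n-1}" "k \<in> {1..n-1}" "a \<noteq> b" "a \<noteq> k" "b \<noteq> k"
  shows "y (a, b) = y (a, k)"
proof -
  have path_distinct: "distinct [a, b, n, k]" and path_in_range: "set [a, b, n, k] \<subseteq> {1..n}"
    and n_large: "2 \<le> n"
    using assms by auto
  obtain p where p: "derangement n p" and pa: "p a = b" and pb: "p b = n" and pn: "p n = k"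
    using derangement_through_path[OF path_distinct path_in_range] by (auto simp: All_less_Suc2)
  have inj: "inj p"
    using p unfolding derangement_def by (meson permutes_inj)
  have pk: "p k \<noteq> b"
    using assms(5) pa inj by (metis injD)
  have preimage: "p i \<noteq> b \<and> p i \<noteq> k" if "i \<noteq> a" "i \<noteq> n" for i
    using that pa pn inj by (metis injD)
  define q where "q = transpose b k \<circ> p"
  have q: "derangement n q"
    unfolding q_def using assms pb pk by (intro derangement_compose_transpose_left[OF p]) auto
  have "row_value n p y - row_value n q y
      = row_term n p y a + row_term n p y b - row_term n q y a - row_term n q y b"
    using assms preimage by (intro row_value_diff) (auto simp: q_def)
  also have "\<dots> = y (a, b) - y (a, k)"
    using assms pa pb n_large by (auto simp: row_term_def q_def)
  finally show ?thesis using row_value_const[OF p q] by simp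
qed

(* For n >= 4, a third index b avoiding i and k connects (i,j) to (i,b), (k,b) and (k,l). *)
lemma offdiag_constant_large:
  assumes "4 \<le> n" "i \<in> {1..n-1}" "j \<in> {1..n-1}" "k \<in> {1..n-1}" "l \<in> {1..n-1}"
    "i \<noteq> j" "k \<noteq> l"
  shows "y (i, j) = y (k, l)"
proof -
  have "\<exists>b::nat. 1 \<le> b \<and> b \<le> 3 \<and> b \<noteq> i \<and> b \<noteq> k"
    by presburger
  then obtain b :: nat where b: "1 \<le> b" "b \<le> 3" "b \<noteq> i" "b \<noteq> k"
    by blast
  then have b_range: "b \<in> {1..n-1}" using assms(1) by auto
  have "y (i, j) = y (i, b)"
    using same_row[of i j b] assms(2,3,6) b(3) b_range by metis
  also have "\<dots> = y (k, b)"
    using same_column[of i k b] assms(2,4) b(3,4) b_range by metis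
  also have "\<dots> = y (k, l)"
    using same_row[of k b l] assms(4,5,7) b(4) b_range by metis
  finally show ?thesis .
qed

(* For n = 3 the two derangements are the 3-cycles, with row values y(1,2) and y(2,1). *)
lemma offdiag_constant_three:
  assumes "n = 3"
  shows "y (1, 2) = y (2, 1)"
proof -
  obtain p where p: "derangement n p" "p 1 = 2" "p 2 = 3"
    using derangement_through_path[of "[1, 2, 3]" n] assms by (auto simp: All_less_Suc2)
  obtain q where q: "derangement n q" "q 2 = 1" "q 1 = 3"
    using derangement_through_path[of "[2, 1, 3]" n] assms by (auto simp: All_less_Suc2)
  have range: "{1..n-1} = {1, 2::nat}"
    using assms by auto
  have "row_value n p y = y (1, 2)" "row_value n q y = y (2, 1)"
    unfolding row_value_def range using p q assms by (simp_all add: row_term_def)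
  then show ?thesis using row_value_const[OF p(1) q(1)] by simp
qed

lemma offdiag_constant:
  assumes "3 \<le> n" "i \<in> {1..n-1}" "j \<in> {1..n-1}" "k \<in> {1..n-1}" "l \<in> {1..n-1}"
    "i \<noteq> j" "k \<noteq> l"
  shows "y (i, j) = y (k, l)"
proof (cases "n = 3")
  case True
  then have "(i, j) \<in> {(1, 2), (2, 1)}" "(k, l) \<in> {(1, 2), (2, 1)}"
    using assms by auto
  then show ?thesis using offdiag_constant_three[OF True] by auto
next
  case False
  then show ?thesis
    by (intro offdiag_constant_large) (use assms in auto)
qed

end

(* If y is constant c off the diagonal, every derangement has row value (n-2) c: exactly one
   position is sent to n, and all others to a different index in {1..n-1}. *)
lemma row_value_offdiag_constant:
  assumes "derangement n p" "1 \<le> n"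
    and const: "\<And>i j. i \<in> {1..n-1} \<Longrightarrow> j \<in> {1..n-1} \<Longrightarrow> i \<noteq> j \<Longrightarrow> y (i, j) = c"
  shows "row_value n p y = (real n - 2) * c"
proof -
  have perm: "p permutes {1..n}" and no_fix: "\<And>i. i \<in> {1..n} \<Longrightarrow> p i \<noteq> i"
    using assms(1) unfolding derangement_def by auto
  obtain m where m: "m \<in> {1..n}" "p m = n"
    using permutes_image[OF perm] assms(2) by (metis atLeastAtMost_iff imageE order_refl)
  have m_range: "m \<in> {1..n-1}"
    using m no_fix[of n] assms(2) by (cases "m = n") auto
  have "row_term n p y m = 0"
    using m assms(2) by (auto simp: row_term_def)
  moreover have "row_term n p y i = c" if "i \<in> {1..n-1} - {m}" for i
  proof -
    have "p i \<in> {1..n}" "p i \<noteq> i"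
      using that permutes_in_image[OF perm, of i] no_fix[of i] by auto
    moreover have "p i \<noteq> n"
      using that m(2) permutes_inj[OF perm] by (metis DiffE injD singletonI)
    ultimately show ?thesis
      using that const[of i "p i"] by (auto simp: row_term_def)
  qed
  ultimately have "row_value n p y = (\<Sum>i\<in>{1..n-1} - {m}. c)"
    unfolding row_value_def using m_range by (simp add: sum.remove)
  also have "\<dots> = (real n - 2) * c"
  proof -
    have "2 \<le> n" using m_range by auto
    then show ?thesis using m_range by (simp add: of_nat_diff)
  qed
  finally show ?thesis .
qed

theorem lemma12:
  fixes n :: nat and y :: "nat \<times> nat \<Rightarrow> real" and t :: real
  assumes "n \<ge> 3"
    and "\<And>p. derangement n p \<Longrightarrow> N1_row_apply n p y t = 0"
  shows "\<exists>c::real. (\<forall>i\<in>{1..n-1}. \<forall>j\<in>{1..n-1}. i \<noteq> j \<longrightarrow> y (i, j) = c)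
                 \<and> t = - (real n - 2) * c"
proof -
  have row_value: "row_value n p y = - t" if "derangement n p" for p
    using assms(2)[OF that] by (simp add: N1_row_apply_eq)
  have row_value_const: "row_value n p y = row_value n q y"
    if "derangement n p" "derangement n q" for p q
    using row_value that by simp
  have const: "y (i, j) = y (1, 2)"
    if "i \<in> {1..n-1}" "j \<in> {1..n-1}" "i \<noteq> j" for i j
    using offdiag_constant[OF row_value_const assms(1) that(1,2) _ _ that(3)] assms(1) by auto
  obtain p where p: "derangement n p"
    using derangement_through_path[of "[1, 2]" n] assms(1) by auto
  have "row_value n p y = (real n - 2) * y (1, 2)"
    using row_value_offdiag_constant[of n p y "y (1, 2)", OF p _ const] assms(1) by simp
  then have "t = - (real n - 2) * y (1, 2)"
    using row_value[OF p] by (simp add: algebra_simps)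
  moreover have "\<forall>i\<in>{1..n-1}. \<forall>j\<in>{1..n-1}. i \<noteq> j \<longrightarrow> y (i, j) = y (1, 2)"
    by (intro ballI impI const)
  ultimately show ?thesis by blast
qed

end
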